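(* Let $Z$ be a weakly efficient solution of the SDP relaxation described in the context, with first-row data $(z_+,z_-,\rho)$. If $\rho=1$, then $(z_+,z_-,1)$ is feasible and weakly efficient for the QCQP.
   Context: Let $k,m,n\in\mathbb{N}$. Let $A_c,A_\delta\in\mathbb{R}^{m\times n}$ with $A_\delta\ge 0$ entrywise, $b_c,b_\delta\in\mathbb{R}^m$ with $b_\delta\ge0$, $G\in\mathbb{R}^{k\times n}$, and $\ell,u\in\mathbb{R}^n$ with $\ell\le u$. All vector inequalities are componentwise. QCQP: variables $x_+,x_-\in\mathbb{R}^n_{\ge0}$, $r\in[0,1]$, subject to $A_cx_+-A_cx_-+rA_\delta x_++rA_\delta x_-+rb_\delta-b_c\le0$ and $\ell\le x_+-x_-\le u$; vector objective $F(x_+,x_-,r)=(G(x_+-x_-),-r)\in\mathbb{R}^{k+1}$, minimized in the Pareto sense. SDP relaxation: variable a symmetric positive semidefinite matrix $Z$ of size $(2n+2)\times(2n+2)$ written in block form with row/column blocks of sizes $1,n,n,1$: $Z=\begin{pmatrix} Z_{00} & z_+^T & z_-^T & \rho\\ z_+ & * & * & w_+\\ z_- & * & * & w_-\\ \rho & w_+^T & w_-^T & \sigma\end{pmatrix}$, with $z_\pm,w_\pm\in\mathbb{R}^n$, $\rho,\sigma\in\mathbb{R}$. Constraints: $Z_{00}=1$; $A_cz_+-A_cz_-+A_\delta(w_++w_-)+\rho\, b_\delta-b_c\le0$; $\ell\le z_+-z_-\le u$; $z_+,z_-\ge0$, $\rho\ge0$, $w_+,w_-\ge0$; $\sigma\le1$.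 Vector objective $(G(z_+-z_-),-\rho)\in\mathbb{R}^{k+1}$, minimized in the Pareto sense. Efficiency (for minimizing a vector function $f$ over a feasible set $\mathcal{X}$): $x^*\in\mathcal{X}$ is efficient if there is no $x\in\mathcal{X}$ with $f(x)\le f(x^* )$ and $f(x)\ne f(x^* )$; weakly efficient if there is no $x\in\mathcal{X}$ with $f(x)<f(x^* )$ (all components strict). *)

theory Defs
  imports Complex_Main
begin

text \<open>Dimensions k, m, n are natural numbers. Vectors in R^n are functions nat => real
  (only indices < n matter), matrices in R^(p x q) are functions nat => nat => real
  (only indices < p, < q matter).\<close>

definition mvec :: "nat \<Rightarrow> (nat \<Rightarrow> nat \<Rightarrow> real) \<Rightarrow> (nat \<Rightarrow> real) \<Rightarrow> nat \<Rightarrow> real" where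
  "mvec n A x = (\<lambda>i. \<Sum>j<n. A i j * x j)"

definition efficient :: "('a \<Rightarrow> bool) \<Rightarrow> nat \<Rightarrow> ('a \<Rightarrow> nat \<Rightarrow> real) \<Rightarrow> 'a \<Rightarrow> bool" where
  "efficient feas K f x \<longleftrightarrow> feas x \<and>
     \<not> (\<exists>y. feas y \<and> (\<forall>i<K. f y i \<le> f x i) \<and> (\<exists>i<K. f y i \<noteq> f x i))"

definition weakly_efficient :: "('a \<Rightarrow> bool) \<Rightarrow> nat \<Rightarrow> ('a \<Rightarrow> nat \<Rightarrow> real) \<Rightarrow> 'a \<Rightarrow> bool" where
  "weakly_efficient feas K f x \<longleftrightarrow> feas x \<and> \<not> (\<exists>y. feas y \<and> (\<forall>i<K. f y i < f x i))"

definition qcqp_feasible ::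
  "nat \<Rightarrow> nat \<Rightarrow> (nat \<Rightarrow> nat \<Rightarrow> real) \<Rightarrow> (nat \<Rightarrow> nat \<Rightarrow> real) \<Rightarrow> (nat \<Rightarrow> real) \<Rightarrow> (nat \<Rightarrow> real)
   \<Rightarrow> (nat \<Rightarrow> real) \<Rightarrow> (nat \<Rightarrow> real) \<Rightarrow> (nat \<Rightarrow> real) \<times> (nat \<Rightarrow> real) \<times> real \<Rightarrow> bool" where
  "qcqp_feasible m n Ac Ad bc bd l u = (\<lambda>(xp, xm, r).
     (\<forall>j<n. 0 \<le> xp j \<and> 0 \<le> xm j) \<and> 0 \<le> r \<and> r \<le> 1 \<and>
     (\<forall>i<m. mvec n Ac xp i - mvec n Ac xm i + r * mvec n Ad xp i + r * mvec n Ad xm i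
              + r * bd i - bc i \<le> 0) \<and>
     (\<forall>j<n. l j \<le> xp j - xm j \<and> xp j - xm j \<le> u j))"

definition qcqp_obj ::
  "nat \<Rightarrow> nat \<Rightarrow> (nat \<Rightarrow> nat \<Rightarrow> real) \<Rightarrow> (nat \<Rightarrow> real) \<times> (nat \<Rightarrow> real) \<times> real \<Rightarrow> nat \<Rightarrow> real" where
  "qcqp_obj k n G = (\<lambda>(xp, xm, r) i.
     if i < k then mvec n G (\<lambda>j. xp j - xm j) i else - r)"

text \<open>Z is a (2n+2)x(2n+2) matrix with indices 0..2n+1; block rows/columns:
  0 | 1..n | n+1..2n | 2n+1.\<close>

definition sdp_zp :: "nat \<Rightarrow> (nat \<Rightarrow> nat \<Rightarrow> real) \<Rightarrow> nat \<Rightarrow> real" where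
  "sdp_zp n Z = (\<lambda>j. Z 0 (1 + j))"
definition sdp_zm :: "nat \<Rightarrow> (nat \<Rightarrow> nat \<Rightarrow> real) \<Rightarrow> nat \<Rightarrow> real" where
  "sdp_zm n Z = (\<lambda>j. Z 0 (n + 1 + j))"
definition sdp_rho :: "nat \<Rightarrow> (nat \<Rightarrow> nat \<Rightarrow> real) \<Rightarrow> real" where
  "sdp_rho n Z = Z 0 (2 * n + 1)"
definition sdp_wp :: "nat \<Rightarrow> (nat \<Rightarrow> nat \<Rightarrow> real) \<Rightarrow> nat \<Rightarrow> real" where
  "sdp_wp n Z = (\<lambda>j. Z (1 + j) (2 * n + 1))"
definition sdp_wm :: "nat \<Rightarrow> (nat \<Rightarrow> nat \<Rightarrow> real) \<Rightarrow> nat \<Rightarrow> real" where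
  "sdp_wm n Z = (\<lambda>j. Z (n + 1 + j) (2 * n + 1))"
definition sdp_sigma :: "nat \<Rightarrow> (nat \<Rightarrow> nat \<Rightarrow> real) \<Rightarrow> real" where
  "sdp_sigma n Z = Z (2 * n + 1) (2 * n + 1)"

definition psd :: "nat \<Rightarrow> (nat \<Rightarrow> nat \<Rightarrow> real) \<Rightarrow> bool" where
  "psd N Z \<longleftrightarrow> (\<forall>i<N. \<forall>j<N. Z i j = Z j i) \<and>
     (\<forall>v. 0 \<le> (\<Sum>i<N. \<Sum>j<N. v i * Z i j * v j))"

definition sdp_feasible ::
  "nat \<Rightarrow> nat \<Rightarrow> (nat \<Rightarrow> nat \<Rightarrow> real) \<Rightarrow> (nat \<Rightarrow> nat \<Rightarrow> real) \<Rightarrow> (nat \<Rightarrow> real) \<Rightarrow> (nat \<Rightarrow> real)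
   \<Rightarrow> (nat \<Rightarrow> real) \<Rightarrow> (nat \<Rightarrow> real) \<Rightarrow> (nat \<Rightarrow> nat \<Rightarrow> real) \<Rightarrow> bool" where
  "sdp_feasible m n Ac Ad bc bd l u Z \<longleftrightarrow>
     psd (2 * n + 2) Z \<and> Z 0 0 = 1 \<and>
     (\<forall>i<m. mvec n Ac (sdp_zp n Z) i - mvec n Ac (sdp_zm n Z) i
              + mvec n Ad (\<lambda>j. sdp_wp n Z j + sdp_wm n Z j) i
              + sdp_rho n Z * bd i - bc i \<le> 0) \<and>
     (\<forall>j<n. l j \<le> sdp_zp n Z j - sdp_zm n Z j \<and> sdp_zp n Z j - sdp_zm n Z j \<le> u j) \<and>
     (\<forall>j<n. 0 \<le> sdp_zp n Z j \<and> 0 \<le> sdp_zm n Z j) \<and> 0 \<le> sdp_rho n Z \<and>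
     (\<forall>j<n. 0 \<le> sdp_wp n Z j \<and> 0 \<le> sdp_wm n Z j) \<and>
     sdp_sigma n Z \<le> 1"

definition sdp_obj ::
  "nat \<Rightarrow> nat \<Rightarrow> (nat \<Rightarrow> nat \<Rightarrow> real) \<Rightarrow> (nat \<Rightarrow> nat \<Rightarrow> real) \<Rightarrow> nat \<Rightarrow> real" where
  "sdp_obj k n G Z = (\<lambda>i.
     if i < k then mvec n G (\<lambda>j. sdp_zp n Z j - sdp_zm n Z j) i else - sdp_rho n Z)"

end

theory Submission
  imports Defs
begin

(* Let L = 2n+1 be the last index. Since Z 0 0 = Z 0 L = 1 and Z L L <= 1, the vector
   e_0 - e_L has quadratic form Z L L - 1 <= 0 under the positive semidefinite Z, so it lies in
   the kernel of Z: the last column of Z equals the first, i.e. w_+ = z_+ and w_- = z_-. The SDP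
   constraint then is exactly the QCQP constraint at r = 1, and weak efficiency is automatic
   because r = 1 already minimizes the last objective -r. *)

definition quad_form :: "nat \<Rightarrow> (nat \<Rightarrow> nat \<Rightarrow> real) \<Rightarrow> (nat \<Rightarrow> real) \<Rightarrow> real" where
  "quad_form N Z v = (\<Sum>i<N. \<Sum>j<N. v i * Z i j * v j)"

lemma psd_iff_quad_form:
  "psd N Z \<longleftrightarrow> (\<forall>i<N. \<forall>j<N. Z i j = Z j i) \<and> (\<forall>v. 0 \<le> quad_form N Z v)"
  unfolding psd_def quad_form_def ..

lemma linear_coeff_zero_if_quadratic_nonneg:
  fixes d c :: real
  assumes "\<And>t. 0 \<le> 2 * t * d + t\<^sup>2 * c"
  shows "d = 0"
proof (rule ccontr)
  assume "d \<noteq> 0"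
  define s where "s = 1 / (\<bar>c\<bar> + 1)"
  have "s > 0" "s * c < 1" unfolding s_def by (simp_all add: add_pos_nonneg field_simps)
  have "0 \<le> 2 * (- s * d) * d + (- s * d)\<^sup>2 * c" by (rule assms)
  also have "\<dots> = s * d\<^sup>2 * (s * c - 2)" by (simp add: power2_eq_square algebra_simps)
  also have "\<dots> < 0"
    using \<open>s > 0\<close> \<open>s * c < 1\<close> \<open>d \<noteq> 0\<close> by (simp add: mult_pos_neg)
  finally show False by simp
qed

lemma sum_mult_unit:
  fixes f :: "nat \<Rightarrow> real"
  assumes "b < N"
  shows "(\<Sum>j<N. f j * of_bool (j = b)) = f b"
  using assms by (simp add: Int_absorb1)

lemma bilinear_units:
  fixes Z :: "nat \<Rightarrow> nat \<Rightarrow> real"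
  assumes "a < N" "b < N"
  shows "(\<Sum>i<N. \<Sum>j<N. of_bool (i = a) * Z i j * of_bool (j = b)) = Z a b"
proof -
  have "(\<Sum>i<N. \<Sum>j<N. of_bool (i = a) * Z i j * of_bool (j = b))
      = (\<Sum>i<N. of_bool (i = a) * Z i b)"
    by (simp only: sum_mult_unit[OF \<open>b < N\<close>])
  also have "\<dots> = Z a b"
    using sum_mult_unit[OF \<open>a < N\<close>, of "\<lambda>i. Z i b"] by (simp only: mult.commute)
  finally show ?thesis .
qed

lemma quad_form_add_unit:
  assumes sym: "\<forall>i<N. \<forall>j<N. Z i j = Z j i" and "p < N"
  shows "quad_form N Z (\<lambda>i. v i + t * of_bool (i = p))
    = quad_form N Z v + 2 * t * mvec N Z v p + t\<^sup>2 * Z p p"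
proof -
  let ?e = "\<lambda>i. of_bool (i = p) :: real"
  have row: "(\<Sum>i<N. \<Sum>j<N. ?e i * Z i j * v j) = mvec N Z v p"
    using \<open>p < N\<close> by (simp add: mvec_def mult.assoc flip: sum_distrib_left)
  have col: "(\<Sum>i<N. \<Sum>j<N. v i * Z i j * ?e j) = mvec N Z v p"
    unfolding mvec_def using \<open>p < N\<close> sym by (auto simp: mult.commute intro: sum.cong)
  have diag: "(\<Sum>i<N. \<Sum>j<N. ?e i * Z i j * ?e j) = Z p p"
    using \<open>p < N\<close> by (intro bilinear_units)
  have expand: "(v i + t * ?e i) * Z i j * (v j + t * ?e j)
      = v i * Z i j * v j + t * (?e i * Z i j * v j) + t * (v i * Z i j * ?e j)
        + t\<^sup>2 * (?e i * Z i j * ?e j)" for i j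
    by (simp add: algebra_simps power2_eq_square)
  have "quad_form N Z (\<lambda>i. v i + t * ?e i)
      = quad_form N Z v + t * (\<Sum>i<N. \<Sum>j<N. ?e i * Z i j * v j)
        + t * (\<Sum>i<N. \<Sum>j<N. v i * Z i j * ?e j) + t\<^sup>2 * (\<Sum>i<N. \<Sum>j<N. ?e i * Z i j * ?e j)"
    unfolding quad_form_def expand by (simp only: sum.distrib sum_distrib_left)
  then show ?thesis
    unfolding row col diag by simp
qed

lemma psd_quad_form_zero_imp_mvec_zero:
  assumes "psd N Z" and "quad_form N Z v = 0" and "p < N"
  shows "mvec N Z v p = 0"
proof (rule linear_coeff_zero_if_quadratic_nonneg)
  fix t
  have "0 \<le> quad_form N Z (\<lambda>i. v i + t * of_bool (i = p))"
    using \<open>psd N Z\<close> by (simp add: psd_iff_quad_form)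
  also have "\<dots> = 2 * t * mvec N Z v p + t\<^sup>2 * Z p p"
    using assms by (simp add: psd_iff_quad_form quad_form_add_unit)
  finally show "0 \<le> 2 * t * mvec N Z v p + t\<^sup>2 * Z p p" .
qed

lemma quad_form_unit_diff:
  assumes "a < N" "b < N"
  shows "quad_form N Z (\<lambda>i. of_bool (i = a) - of_bool (i = b)) = Z a a - Z a b - Z b a + Z b b"
proof -
  let ?e = "\<lambda>c i. of_bool (i = c) :: real"
  have "(?e a i - ?e b i) * Z i j * (?e a j - ?e b j)
      = ?e a i * Z i j * ?e a j - ?e a i * Z i j * ?e b j
        - ?e b i * Z i j * ?e a j + ?e b i * Z i j * ?e b j" for i j
    by (simp add: algebra_simps)
  then show ?thesis
    using assms by (simp only: quad_form_def sum.distrib sum_subtractf bilinear_units)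
qed

lemma mvec_unit_diff:
  assumes "a < N" "b < N"
  shows "mvec N Z (\<lambda>i. of_bool (i = a) - of_bool (i = b)) p = Z p a - Z p b"
  using assms by (simp add: mvec_def algebra_simps sum_subtractf)

lemma psd_columns_eq:
  assumes "psd N Z" "a < N" "b < N" "p < N" and "Z a a + Z b b \<le> 2 * Z a b"
  shows "Z p a = Z p b"
proof -
  let ?v = "\<lambda>i. of_bool (i = a) - of_bool (i = b) :: real"
  have "Z b a = Z a b" using assms(1-3) by (simp add: psd_def)
  then have "quad_form N Z ?v \<le> 0"
    using assms(2,3,5) by (simp add: quad_form_unit_diff)
  moreover have "0 \<le> quad_form N Z ?v"
    using \<open>psd N Z\<close> by (simp add: psd_iff_quad_form)
  ultimately have "mvec N Z ?v p = 0"
    using assms(1,4) by (intro psd_quad_form_zero_imp_mvec_zero) auto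
  then show ?thesis
    using assms(2,3) by (simp add: mvec_unit_diff)
qed

lemma sdp_rho_one_imp_w_eq_z:
  assumes "sdp_feasible m n Ac Ad bc bd l u Z" and "sdp_rho n Z = 1" and "j < n"
  shows "sdp_wp n Z j = sdp_zp n Z j" and "sdp_wm n Z j = sdp_zm n Z j"
proof -
  let ?L = "2 * n + 1"
  have psd: "psd (2 * n + 2) Z" and "Z 0 0 = 1" "Z 0 ?L = 1" "Z ?L ?L \<le> 1"
    using assms(1,2) by (auto simp: sdp_feasible_def sdp_rho_def sdp_sigma_def)
  then have "Z 0 0 + Z ?L ?L \<le> 2 * Z 0 ?L" by simp
  then have col: "Z p 0 = Z p ?L" if "p < 2 * n + 2" for p
    using psd that by (intro psd_columns_eq) auto
  have sym: "Z p 0 = Z 0 p" if "p < 2 * n + 2" for p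
    using psd that by (simp add: psd_def)
  show "sdp_wp n Z j = sdp_zp n Z j"
    using col[of "1 + j"] sym[of "1 + j"] \<open>j < n\<close> by (simp add: sdp_wp_def sdp_zp_def)
  show "sdp_wm n Z j = sdp_zm n Z j"
    using col[of "n + 1 + j"] sym[of "n + 1 + j"] \<open>j < n\<close> by (simp add: sdp_wm_def sdp_zm_def)
qed

lemma sdp_rho_one_imp_qcqp_feasible:
  assumes "sdp_feasible m n Ac Ad bc bd l u Z" and "sdp_rho n Z = 1"
  shows "qcqp_feasible m n Ac Ad bc bd l u (sdp_zp n Z, sdp_zm n Z, 1)"
proof -
  have "mvec n Ad (\<lambda>j. sdp_wp n Z j + sdp_wm n Z j)
      = (\<lambda>i. mvec n Ad (sdp_zp n Z) i + mvec n Ad (sdp_zm n Z) i)"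
    using sdp_rho_one_imp_w_eq_z[OF assms]
    by (simp add: mvec_def distrib_left sum.distrib)
  then show ?thesis
    using assms by (auto simp: qcqp_feasible_def sdp_feasible_def)
qed

lemma qcqp_weakly_efficient_if_r_one:
  assumes "qcqp_feasible m n Ac Ad bc bd l u (xp, xm, 1)"
  shows "weakly_efficient (qcqp_feasible m n Ac Ad bc bd l u) (k + 1) (qcqp_obj k n G) (xp, xm, 1)"
  unfolding weakly_efficient_def
proof (intro conjI assms notI)
  assume "\<exists>y. qcqp_feasible m n Ac Ad bc bd l u y \<and>
      (\<forall>i<k + 1. qcqp_obj k n G y i < qcqp_obj k n G (xp, xm, 1) i)"
  then obtain y where "qcqp_feasible m n Ac Ad bc bd l u y"
    and "qcqp_obj k n G y k < qcqp_obj k n G (xp, xm, 1) k"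
    by auto
  then show False by (cases y) (simp add: qcqp_feasible_def qcqp_obj_def)
qed

theorem mainTheorem4:
  fixes k m n :: nat
    and Ac Ad G :: "nat \<Rightarrow> nat \<Rightarrow> real"
    and bc bd l u :: "nat \<Rightarrow> real"
    and Z :: "nat \<Rightarrow> nat \<Rightarrow> real"
  assumes "\<forall>i<m. \<forall>j<n. 0 \<le> Ad i j"
    and "\<forall>i<m. 0 \<le> bd i"
    and "\<forall>j<n. l j \<le> u j"
    and "weakly_efficient (sdp_feasible m n Ac Ad bc bd l u) (k + 1) (sdp_obj k n G) Z"
    and "sdp_rho n Z = 1"
  shows "qcqp_feasible m n Ac Ad bc bd l u (sdp_zp n Z, sdp_zm n Z, 1)
    \<and> weakly_efficient (qcqp_feasible m n Ac Ad bc bd l u) (k + 1) (qcqp_obj k n G)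
        (sdp_zp n Z, sdp_zm n Z, 1)"
proof -
  have "sdp_feasible m n Ac Ad bc bd l u Z"
    using assms(4) by (simp add: weakly_efficient_def)
  then have "qcqp_feasible m n Ac Ad bc bd l u (sdp_zp n Z, sdp_zm n Z, 1)"
    using assms(5) by (rule sdp_rho_one_imp_qcqp_feasible)
  then show ?thesis
    using qcqp_weakly_efficient_if_r_one by blast
qed

end
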